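(* Let $\boldsymbol{S}$ be a $p\times p$ symmetric positive semidefinite matrix that is nonsingular, let $\rho>0$, $k$ an integer with $0\le k\le\binom p2$, $\mathcal{C}=\{\boldsymbol{A}\in\mathbb{R}^{p\times p}:\boldsymbol{A}=\boldsymbol{A}^T,\ \|\boldsymbol{A}\|_0\le 2k+p\}$, and for positive definite $\boldsymbol{\Sigma}$ let $h_\rho(\boldsymbol{\Sigma})=\ln\det\boldsymbol{\Sigma}+\mathrm{tr}(\boldsymbol{\Sigma}^{-1}\boldsymbol{S})+\frac\rho2\mathrm{dist}(\boldsymbol{\Sigma},\mathcal{C})^2$. Then $h_\rho$ is coercive on the positive definite cone: $h_\rho(\boldsymbol{\Sigma})\to\infty$ whenever $\boldsymbol{\Sigma}$ ranges over positive definite matrices with $\|\boldsymbol{\Sigma}\|\to\infty$ or $\|\boldsymbol{\Sigma}^{-1}\|\to\infty$.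
   Context: $\|\boldsymbol{A}\|_0$ is the number of nonzero entries of $\boldsymbol{A}$; $\mathrm{dist}$ is Frobenius distance to the set $\mathcal{C}$. *)

theory Defs
  imports "HOL-Analysis.Analysis"
begin

definition psd_mat :: "real^'n^'n \<Rightarrow> bool" where
  "psd_mat A \<longleftrightarrow> transpose A = A \<and> (\<forall>x. 0 \<le> x \<bullet> (A *v x))"

definition pd_mat :: "real^'n^'n \<Rightarrow> bool" where
  "pd_mat A \<longleftrightarrow> transpose A = A \<and> (\<forall>x. x \<noteq> 0 \<longrightarrow> 0 < x \<bullet> (A *v x))"

definition nnz :: "real^'n^'n \<Rightarrow> nat" where
  "nnz A = card {(i, j). A $ i $ j \<noteq> 0}"

definition sparse_sym_set :: "nat \<Rightarrow> (real^'n^'n) set" where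
  "sparse_sym_set k = {A. transpose A = A \<and> nnz A \<le> 2 * k + CARD('n)}"

text \<open>The penalized objective h_rho; dist is the Frobenius distance (the norm on real^'n^'n).\<close>
definition h_rho :: "real^'n^'n \<Rightarrow> nat \<Rightarrow> real \<Rightarrow> real^'n^'n \<Rightarrow> real" where
  "h_rho S k \<rho> \<Sigma> = ln (det \<Sigma>) + trace (matrix_inv \<Sigma> ** S)
      + \<rho> / 2 * (infdist \<Sigma> (sparse_sym_set k))\<^sup>2"

end

theory Submission
  imports Defs
begin

(*
  Write a positive definite Sigma in an orthonormal eigenframe v_i with eigenvalues
  d_i > 0; the spectral theorem is obtained by maximising the quadratic form on the
  unit sphere of an invariant subspace. Then ln det Sigma = sum ln d_i and
  tr(Sigma^-1 S) = sum (v_i . S v_i) / d_i >= s * sum 1/d_i, where s > 0 is the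
  minimum of x . S x on the unit sphere. The penalty is only used to be nonnegative,
  so neither k nor the sparsity constraint matters. Hence
  h_rho(Sigma) >= sum (ln d_i + s/d_i) >= sum |ln d_i| + p * c for a constant c.
  Conversely ||Sigma|| <= sum d_i and ||Sigma^-1|| <= sum 1/d_i, so if either norm
  exceeds p * exp L, some |ln d_i| exceeds L.
*)

definition orthonormal_frame :: "('i \<Rightarrow> 'a::real_inner) \<Rightarrow> bool" where
  "orthonormal_frame v \<longleftrightarrow> (\<forall>i j. v i \<bullet> v j = (if i = j then 1 else 0))"

lemma orthonormal_frame_norm:
  "orthonormal_frame v \<Longrightarrow> norm (v i) = 1"
  by (simp add: orthonormal_frame_def norm_eq_1)

lemma quadratic_nonpos_imp_linear_coeff_zero:
  fixes b c :: real
  assumes "\<And>t. 2 * t * b + t\<^sup>2 * c \<le> 0"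
  shows "b = 0"
proof -
  have "((\<lambda>t. 2 * t * b + t\<^sup>2 * c) has_real_derivative 2 * b) (at 0)"
    by (auto intro!: derivative_eq_intros)
  from DERIV_local_max[OF this zero_less_one] assms show "b = 0"
    by simp
qed

lemma inner_transpose_matrix_vector:
  fixes A :: "real^'n^'m"
  shows "x \<bullet> (transpose A *v y) = (A *v x) \<bullet> y"
  by (metis dot_lmul_matrix inner_commute transpose_matrix_vector)

lemma quadratic_form_expand:
  fixes A :: "real^'n^'n"
  assumes "transpose A = A"
  shows "(x + t *\<^sub>R y) \<bullet> (A *v (x + t *\<^sub>R y))
           = x \<bullet> (A *v x) + 2 * t * (y \<bullet> (A *v x)) + t\<^sup>2 * (y \<bullet> (A *v y))"
  using inner_transpose_matrix_vector[of x A y] assms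
  by (simp add: algebra_simps inner_commute power2_eq_square)

lemma symmetric_matrix_eigenvector_in_invariant_subspace:
  fixes A :: "real^'n^'n"
  assumes sym: "transpose A = A" and W: "subspace W" and w: "w \<in> W" "w \<noteq> 0"
    and invariant: "\<And>x. x \<in> W \<Longrightarrow> A *v x \<in> W"
  obtains x c where "x \<in> W" "norm x = 1" "A *v x = c *\<^sub>R x"
proof -
  let ?K = "W \<inter> sphere 0 1"
  have compact: "compact ?K"
    by (metis closed_Int_compact closed_subspace[OF W] compact_sphere)
  have nonempty: "?K \<noteq> {}"
  proof -
    have "w /\<^sub>R norm w \<in> ?K"
      using w W by (simp add: subspace_scale)
    then show ?thesis
      by blast
  qed
  have continuous: "continuous_on ?K (\<lambda>x. x \<bullet> (A *v x))"
    by (intro continuous_intros linear_continuous_on matrix_vector_mul_bounded_linear)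
  obtain x where "x \<in> ?K"
    and max: "\<And>y. y \<in> ?K \<Longrightarrow> y \<bullet> (A *v y) \<le> x \<bullet> (A *v x)"
    using continuous_attains_sup[OF compact nonempty continuous] by blast
  then have x: "x \<in> W" "norm x = 1"
    by auto
  define q where "q = x \<bullet> (A *v x)"
  have le: "z \<bullet> (A *v z) \<le> q * (z \<bullet> z)" if "z \<in> W" for z
  proof (cases "z = 0")
    case False
    then have "(z /\<^sub>R norm z) \<bullet> (A *v (z /\<^sub>R norm z)) \<le> q"
      using max[of "z /\<^sub>R norm z"] that W by (simp add: q_def subspace_scale)
    with False show ?thesis
      by (simp add: matrix_vector_mult_scaleR dot_square_norm field_simps power2_eq_square)
  qed simp
  define r where "r = A *v x - q *\<^sub>R x"
  \<comment> \<open>first-order condition for the maximum of the Rayleigh quotient at x\<close>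
  have orth: "y \<bullet> r = 0" if "y \<in> W" for y
  proof (rule quadratic_nonpos_imp_linear_coeff_zero)
    fix t :: real
    have "x + t *\<^sub>R y \<in> W"
      using x(1) that W by (simp add: subspace_add subspace_scale)
    moreover have "(x + t *\<^sub>R y) \<bullet> (A *v (x + t *\<^sub>R y))
        = q + 2 * t * (y \<bullet> (A *v x)) + t\<^sup>2 * (y \<bullet> (A *v y))"
      unfolding q_def by (rule quadratic_form_expand[OF sym])
    moreover have "(x + t *\<^sub>R y) \<bullet> (x + t *\<^sub>R y) = 1 + 2 * t * (y \<bullet> x) + t\<^sup>2 * (y \<bullet> y)"
      using x(2) by (simp add: norm_eq_1 algebra_simps inner_commute power2_eq_square)
    ultimately have "q + 2 * t * (y \<bullet> (A *v x)) + t\<^sup>2 * (y \<bullet> (A *v y))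
            \<le> q * (1 + 2 * t * (y \<bullet> x) + t\<^sup>2 * (y \<bullet> y))"
      using le by metis
    then show "2 * t * (y \<bullet> r) + t\<^sup>2 * (y \<bullet> (A *v y) - q * (y \<bullet> y)) \<le> 0"
      by (simp add: r_def algebra_simps)
  qed
  have "r \<in> W"
    using invariant[OF x(1)] x(1) W by (simp add: r_def subspace_diff subspace_scale)
  then have "r = 0"
    using orth inner_eq_zero_iff by blast
  with x that show thesis
    by (simp add: r_def)
qed

lemma symmetric_matrix_eigenvector_orthogonal_to:
  fixes A :: "real^'n^'n"
  assumes sym: "transpose A = A" and B: "finite B" "card B < CARD('n)"
    and eigen: "\<And>b. b \<in> B \<Longrightarrow> \<exists>c. A *v b = c *\<^sub>R b"
  obtains u c where "norm u = 1" "A *v u = c *\<^sub>R u" "\<And>b. b \<in> B \<Longrightarrow> orthogonal b u"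
proof -
  define W where "W = {y. \<forall>b\<in>B. orthogonal b y}"
  have W: "subspace W"
    unfolding W_def by (rule subspace_orthogonal_to_vectors)
  have "dim B < DIM(real^'n)"
    using dim_le_card'[OF B(1)] B(2) by simp
  then obtain w where w: "w \<noteq> 0" "\<And>y. y \<in> span B \<Longrightarrow> orthogonal w y"
    using orthogonal_to_subspace_exists by blast
  then have "w \<in> W"
    using span_base by (auto simp: W_def orthogonal_commute)
  moreover have "A *v y \<in> W" if "y \<in> W" for y
  proof -
    have "b \<bullet> (A *v y) = 0" if "b \<in> B" for b
    proof -
      obtain c where "A *v b = c *\<^sub>R b"
        using eigen[OF \<open>b \<in> B\<close>] by blast
      then show ?thesis
        using inner_transpose_matrix_vector[of b A y] sym \<open>y \<in> W\<close> \<open>b \<in> B\<close>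
        by (simp add: W_def orthogonal_def)
    qed
    then show ?thesis
      by (simp add: W_def orthogonal_def)
  qed
  ultimately obtain u c where u: "u \<in> W" "norm u = 1" "A *v u = c *\<^sub>R u"
    using symmetric_matrix_eigenvector_in_invariant_subspace[OF sym W _ w(1)] by blast
  moreover have "orthogonal b u" if "b \<in> B" for b
    using u(1) that by (simp add: W_def)
  ultimately show thesis
    using that by blast
qed

lemma orthonormal_set_enumeration:
  fixes B :: "'a::real_inner set"
  assumes "finite B" "card B = CARD('n::finite)" "pairwise orthogonal B" "\<And>b. b \<in> B \<Longrightarrow> norm b = 1"
  obtains v :: "'n::finite \<Rightarrow> 'a" where "orthonormal_frame v" "\<And>i. v i \<in> B"
proof -
  obtain v where v: "bij_betw v (UNIV :: 'n set) B"
    using assms(1,2) finite_same_card_bij[of "UNIV :: 'n set" B] by auto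
  then have vB: "v i \<in> B" for i
    by (auto simp: bij_betw_def)
  have "v i \<bullet> v j = (if i = j then 1 else 0)" for i j
  proof (cases "i = j")
    case True
    then show ?thesis
      using assms(4)[OF vB[of i]] by (simp add: norm_eq_1)
  next
    case False
    then have "v i \<noteq> v j"
      using v by (auto simp: bij_betw_def inj_on_def)
    then show ?thesis
      using assms(3) vB[of i] vB[of j] False by (auto simp: pairwise_def orthogonal_def)
  qed
  then have "orthonormal_frame v"
    by (simp add: orthonormal_frame_def)
  with vB that show thesis
    by blast
qed

lemma symmetric_matrix_orthonormal_eigenframe:
  fixes A :: "real^'n^'n"
  assumes sym: "transpose A = A"
  obtains v :: "'n \<Rightarrow> real^'n" and d where "orthonormal_frame v" "\<And>i. A *v v i = d i *\<^sub>R v i"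
proof -
  define unit_eigen where "unit_eigen x \<longleftrightarrow> norm x = 1 \<and> (\<exists>c. A *v x = c *\<^sub>R x)" for x
  have "\<exists>B. finite B \<and> card B = m \<and> pairwise orthogonal B \<and> (\<forall>b\<in>B. unit_eigen b)"
    if "m \<le> CARD('n)" for m
    using that
  proof (induction m)
    case 0
    show ?case
      by (intro exI[of _ "{}"]) simp
  next
    case (Suc m)
    then obtain B where B: "finite B" "card B = m" "pairwise orthogonal B" "\<forall>b\<in>B. unit_eigen b"
      by auto
    obtain u c where u: "norm u = 1" "A *v u = c *\<^sub>R u" "\<And>b. b \<in> B \<Longrightarrow> orthogonal b u"
      using symmetric_matrix_eigenvector_orthogonal_to[OF sym B(1)] B(2,4) Suc.prems
      by (auto simp: unit_eigen_def)
    have "u \<notin> B"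
      using u(1) u(3)[of u] by (auto simp: orthogonal_def)
    with B u show ?case
      by (intro exI[of _ "insert u B"])
        (auto simp: unit_eigen_def pairwise_insert orthogonal_commute)
  qed
  then obtain B where B: "finite B" "card B = CARD('n)" "pairwise orthogonal B" "\<forall>b\<in>B. unit_eigen b"
    by blast
  then obtain v :: "'n \<Rightarrow> real^'n" where v: "orthonormal_frame v" "\<And>i. v i \<in> B"
    using orthonormal_set_enumeration[of B] by (auto simp: unit_eigen_def)
  moreover have "\<forall>i. \<exists>c. A *v v i = c *\<^sub>R v i"
    using B(4) v(2) by (auto simp: unit_eigen_def)
  ultimately show thesis
    using that by metis
qed

lemma pd_mat_orthonormal_eigenframe:
  fixes A :: "real^'n^'n"
  assumes "pd_mat A"
  obtains v :: "'n \<Rightarrow> real^'n" and d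
  where "orthonormal_frame v" "\<And>i. A *v v i = d i *\<^sub>R v i" "\<And>i. 0 < d i"
proof -
  obtain v :: "'n \<Rightarrow> real^'n" and d where v: "orthonormal_frame v" "\<And>i. A *v v i = d i *\<^sub>R v i"
    using symmetric_matrix_orthonormal_eigenframe assms by (metis pd_mat_def)
  have "0 < d i" for i
  proof -
    have "v i \<noteq> 0"
      using orthonormal_frame_norm[OF v(1), of i] by auto
    then have "0 < v i \<bullet> (A *v v i)"
      using assms by (simp add: pd_mat_def)
    then show ?thesis
      using orthonormal_frame_norm[OF v(1), of i] by (simp add: v(2) norm_eq_1)
  qed
  with v that show thesis
    by blast
qed

lemma orthogonal_matrix_orthonormal_frame:
  fixes v :: "'n \<Rightarrow> real^'n"
  assumes "orthonormal_frame v"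
  shows "orthogonal_matrix (\<chi> i j. v j $ i)"
  using assms
  by (simp add: orthogonal_matrix_orthonormal_columns column_def orthonormal_frame_def
      norm_eq_1 orthogonal_def)

lemma trace_eq_sum_orthonormal_frame:
  fixes X :: "real^'n^'n" and v :: "'n \<Rightarrow> real^'n"
  assumes "orthonormal_frame v"
  shows "trace X = (\<Sum>i\<in>UNIV. v i \<bullet> (X *v v i))"
proof -
  let ?P = "\<chi> i j. v j $ i"
  have "trace X = trace ((X ** ?P) ** transpose ?P)"
    using orthogonal_matrix_orthonormal_frame[OF assms]
    by (simp add: orthogonal_matrix_def matrix_mul_assoc[symmetric])
  also have "\<dots> = trace (transpose ?P ** (X ** ?P))"
    by (rule trace_mul_sym)
  also have "\<dots> = (\<Sum>i\<in>UNIV. v i \<bullet> (X *v v i))"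
    by (simp add: trace_def matrix_matrix_mult_def transpose_def inner_vec_def
        matrix_vector_mult_def sum_distrib_left mult.commute)
  finally show ?thesis .
qed

lemma norm_sq_eq_sum_orthonormal_frame:
  fixes X :: "real^'n^'n" and v :: "'n \<Rightarrow> real^'n"
  assumes "orthonormal_frame v"
  shows "(norm X)\<^sup>2 = (\<Sum>i\<in>UNIV. (norm (X *v v i))\<^sup>2)"
proof -
  have "(norm X)\<^sup>2 = (\<Sum>k\<in>UNIV. \<Sum>j\<in>UNIV. X $ k $ j * X $ k $ j)"
    by (simp add: power2_norm_eq_inner inner_vec_def)
  also have "\<dots> = (\<Sum>j\<in>UNIV. \<Sum>k\<in>UNIV. X $ k $ j * X $ k $ j)"
    by (rule sum.swap)
  also have "\<dots> = trace (transpose X ** X)"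
    by (simp add: trace_def matrix_matrix_mult_def transpose_def)
  also have "\<dots> = (\<Sum>i\<in>UNIV. v i \<bullet> (transpose X *v (X *v v i)))"
    by (simp add: trace_eq_sum_orthonormal_frame[OF assms] matrix_vector_mul_assoc)
  also have "\<dots> = (\<Sum>i\<in>UNIV. (X *v v i) \<bullet> (X *v v i))"
    by (simp only: inner_transpose_matrix_vector)
  also have "\<dots> = (\<Sum>i\<in>UNIV. (norm (X *v v i))\<^sup>2)"
    by (simp add: power2_norm_eq_inner)
  finally show ?thesis .
qed

lemma norm_le_sum_norm_orthonormal_frame:
  fixes X :: "real^'n^'n" and v :: "'n \<Rightarrow> real^'n"
  assumes "orthonormal_frame v"
  shows "norm X \<le> (\<Sum>i\<in>UNIV. norm (X *v v i))"
proof -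
  have "norm X = L2_set (\<lambda>i. norm (X *v v i)) UNIV"
    by (simp add: L2_set_def norm_sq_eq_sum_orthonormal_frame[OF assms, symmetric])
  also have "\<dots> \<le> (\<Sum>i\<in>UNIV. norm (X *v v i))"
    by (rule L2_set_le_sum) simp
  finally show ?thesis .
qed

lemma det_eq_prod_eigenvalues:
  fixes A :: "real^'n^'n" and v :: "'n \<Rightarrow> real^'n"
  assumes "orthonormal_frame v" and eigen: "\<And>i. A *v v i = d i *\<^sub>R v i"
  shows "det A = (\<Prod>i\<in>UNIV. d i)"
proof -
  let ?P = "\<chi> i j. v j $ i"
  let ?D = "\<chi> i j. if i = j then d i else 0"
  have "(A ** ?P) $ k $ i = (?P ** ?D) $ k $ i" for k i
  proof -
    have "(A ** ?P) $ k $ i = (A *v v i) $ k"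
      by (simp add: matrix_matrix_mult_def matrix_vector_mult_def)
    moreover have "(?P ** ?D) $ k $ i = (\<Sum>m\<in>UNIV. v m $ k * (if m = i then d m else 0))"
      by (simp add: matrix_matrix_mult_def)
    moreover have "\<dots> = (\<Sum>m\<in>UNIV. if m = i then v i $ k * d i else 0)"
      by (rule sum.cong) auto
    ultimately show ?thesis
      by (simp add: eigen mult.commute)
  qed
  then have "A ** ?P = ?P ** ?D"
    by (simp add: vec_eq_iff)
  then have "det (A ** ?P) = det (?P ** ?D)"
    by (rule arg_cong)
  then have "det A * det ?P = det ?P * det ?D"
    by (simp only: det_mul)
  moreover have "det ?P \<noteq> 0"
    using det_orthogonal_matrix[OF orthogonal_matrix_orthonormal_frame[OF assms(1)]] by auto
  moreover have "det ?D = (\<Prod>i\<in>UNIV. d i)"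
    by (simp add: det_diagonal)
  ultimately show ?thesis
    by simp
qed

lemma matrix_inv_mult_left:
  fixes A :: "'a::semiring_1^'n^'m"
  assumes "invertible A"
  shows "matrix_inv A ** A = mat 1"
  using someI_ex[OF assms[unfolded invertible_def]] by (simp add: matrix_inv_def)

lemma matrix_inv_eigenvector:
  fixes A :: "real^'n^'n"
  assumes "invertible A" and "A *v x = c *\<^sub>R x" and "c \<noteq> 0"
  shows "matrix_inv A *v x = inverse c *\<^sub>R x"
proof -
  have "x = matrix_inv A *v (A *v x)"
    by (simp add: matrix_vector_mul_assoc matrix_inv_mult_left[OF assms(1)])
  also have "\<dots> = c *\<^sub>R (matrix_inv A *v x)"
    by (simp add: assms(2) matrix_vector_mult_scaleR)
  finally have "inverse c *\<^sub>R x = inverse c *\<^sub>R c *\<^sub>R (matrix_inv A *v x)"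
    by simp
  then have "inverse c *\<^sub>R x = matrix_inv A *v x"
    using assms(3) by simp
  then show ?thesis ..
qed

lemma invertible_if_nonzero_eigenvalues:
  fixes A :: "real^'n^'n" and v :: "'n \<Rightarrow> real^'n"
  assumes "orthonormal_frame v" "\<And>i. A *v v i = d i *\<^sub>R v i" "\<And>i. d i \<noteq> 0"
  shows "invertible A"
  using det_eq_prod_eigenvalues[OF assms(1,2)] assms(3) by (simp add: invertible_det_nz)

lemma psd_mat_quadratic_form_eq_0_imp:
  fixes S :: "real^'n^'n"
  assumes "psd_mat S" and u0: "u \<bullet> (S *v u) = 0"
  shows "S *v u = 0"
proof -
  have sym: "transpose S = S" and nonneg: "\<And>x. 0 \<le> x \<bullet> (S *v x)"
    using assms(1) by (auto simp: psd_mat_def)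
  have "- (y \<bullet> (S *v u)) = 0" for y
  proof (rule quadratic_nonpos_imp_linear_coeff_zero)
    fix t :: real
    show "2 * t * - (y \<bullet> (S *v u)) + t\<^sup>2 * - (y \<bullet> (S *v y)) \<le> 0"
      using nonneg[of "u + t *\<^sub>R y"] by (simp add: quadratic_form_expand[OF sym] u0)
  qed
  then have "(S *v u) \<bullet> (S *v u) = 0"
    by simp
  then show ?thesis
    by simp
qed

lemma psd_invertible_quadratic_form_lower_bound:
  fixes S :: "real^'n^'n"
  assumes psd: "psd_mat S" and inv: "invertible S"
  obtains s where "0 < s" "\<And>x. norm x = 1 \<Longrightarrow> s \<le> x \<bullet> (S *v x)"
proof -
  have nonempty: "sphere (0 :: real^'n) 1 \<noteq> {}"
    using norm_axis_1 by (metis mem_sphere_0 empty_iff)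
  have continuous: "continuous_on (sphere 0 1) (\<lambda>x::real^'n. x \<bullet> (S *v x))"
    by (intro continuous_intros linear_continuous_on matrix_vector_mul_bounded_linear)
  obtain u where "u \<in> sphere 0 1"
    and min: "\<And>x. x \<in> sphere 0 1 \<Longrightarrow> u \<bullet> (S *v u) \<le> x \<bullet> (S *v x)"
    using continuous_attains_inf[OF compact_sphere nonempty continuous] by blast
  then have u: "norm u = 1"
    by simp
  have "u \<bullet> (S *v u) \<noteq> 0"
  proof
    assume "u \<bullet> (S *v u) = 0"
    then have "S *v u = 0"
      by (rule psd_mat_quadratic_form_eq_0_imp[OF psd])
    then have "u = 0"
      using inj_matrix_vector_mult[OF inv] by (simp add: inj_on_def)
    with u show False
      by simp
  qed
  moreover have "0 \<le> u \<bullet> (S *v u)"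
    using psd by (simp add: psd_mat_def)
  ultimately have "0 < u \<bullet> (S *v u)"
    by linarith
  with min that show thesis
    by simp
qed

lemma abs_ln_le_ln_add_divide:
  fixes s x :: real
  assumes "0 < s" "0 < x"
  shows "\<bar>ln x\<bar> + min 0 (2 + 2 * ln (s / 2)) \<le> ln x + s / x"
proof -
  have "ln ((s / 2) / x) \<le> (s / 2) / x - 1"
    using assms by (intro ln_le_minus_one) simp
  moreover have "ln ((s / 2) / x) = ln (s / 2) - ln x"
    by (rule ln_divide_pos) (use assms in auto)
  moreover have "0 < s / x"
    using assms by simp
  ultimately show ?thesis
    by (simp add: abs_if min_def)
qed

lemma norm_le_card_mult_eigenvalue_bound:
  fixes A :: "real^'n^'n" and v :: "'n \<Rightarrow> real^'n" and T :: real
  assumes frame: "orthonormal_frame v" and eigen: "\<And>i. A *v v i = d i *\<^sub>R v i"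
    and bound: "\<And>i. \<bar>d i\<bar> \<le> T"
  shows "norm A \<le> CARD('n) * T"
proof -
  have "norm A \<le> (\<Sum>i\<in>UNIV. norm (A *v v i))"
    by (rule norm_le_sum_norm_orthonormal_frame[OF frame])
  also have "\<dots> = (\<Sum>i\<in>UNIV. \<bar>d i\<bar>)"
    by (simp add: eigen orthonormal_frame_norm[OF frame])
  also have "\<dots> \<le> CARD('n) * T"
    using sum_bounded_above[of UNIV "\<lambda>i. \<bar>d i\<bar>" T] bound by simp
  finally show ?thesis .
qed

lemma norms_le_if_abs_ln_eigenvalues_le:
  fixes \<Sigma> :: "real^'n^'n" and v :: "'n \<Rightarrow> real^'n"
  assumes frame: "orthonormal_frame v" and eigen: "\<And>i. \<Sigma> *v v i = d i *\<^sub>R v i"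
    and pos: "\<And>i. 0 < d i" and bound: "\<And>i. \<bar>ln (d i)\<bar> \<le> L"
  shows "norm \<Sigma> \<le> CARD('n) * exp L" "norm (matrix_inv \<Sigma>) \<le> CARD('n) * exp L"
proof -
  have "\<bar>d i\<bar> = exp (ln (d i))" "\<bar>inverse (d i)\<bar> = exp (- ln (d i))" for i
    using pos[of i] by (simp_all add: exp_minus)
  moreover have "exp (ln (d i)) \<le> exp L" "exp (- ln (d i)) \<le> exp L" for i
    using bound[of i] by (simp_all add: abs_le_iff)
  ultimately have bounds: "\<bar>d i\<bar> \<le> exp L" "\<bar>inverse (d i)\<bar> \<le> exp L" for i
    by simp_all
  have nonzero: "d i \<noteq> 0" for i
    using pos[of i] by simp
  have "invertible \<Sigma>"
    by (rule invertible_if_nonzero_eigenvalues[OF frame eigen nonzero])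
  then have inverse_eigen: "matrix_inv \<Sigma> *v v i = inverse (d i) *\<^sub>R v i" for i
    by (rule matrix_inv_eigenvector[OF _ eigen nonzero])
  show "norm \<Sigma> \<le> CARD('n) * exp L"
    by (rule norm_le_card_mult_eigenvalue_bound[OF frame eigen bounds(1)])
  show "norm (matrix_inv \<Sigma>) \<le> CARD('n) * exp L"
    by (rule norm_le_card_mult_eigenvalue_bound[OF frame inverse_eigen bounds(2)])
qed

lemma sum_ln_add_divide_le_h_rho:
  fixes S \<Sigma> :: "real^'n^'n" and v :: "'n \<Rightarrow> real^'n"
  assumes S: "\<And>x. norm x = 1 \<Longrightarrow> s \<le> x \<bullet> (S *v x)" and "0 \<le> \<rho>"
    and frame: "orthonormal_frame v" and eigen: "\<And>i. \<Sigma> *v v i = d i *\<^sub>R v i"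
    and pos: "\<And>i. 0 < d i"
  shows "(\<Sum>i\<in>UNIV. ln (d i) + s / d i) \<le> h_rho S k \<rho> \<Sigma>"
proof -
  have nonzero: "d i \<noteq> 0" for i
    using pos[of i] by simp
  have "ln (det \<Sigma>) = (\<Sum>i\<in>UNIV. ln (d i))"
    unfolding det_eq_prod_eigenvalues[OF frame eigen] by (rule ln_prod) (simp_all add: nonzero)
  moreover have "(\<Sum>i\<in>UNIV. s / d i) \<le> trace (matrix_inv \<Sigma> ** S)"
  proof -
    have "invertible \<Sigma>"
      by (rule invertible_if_nonzero_eigenvalues[OF frame eigen nonzero])
    then have inverse_eigen: "matrix_inv \<Sigma> *v v i = inverse (d i) *\<^sub>R v i" for i
      by (rule matrix_inv_eigenvector[OF _ eigen nonzero])
    have "s / d i \<le> (v i \<bullet> (S *v v i)) / d i" for i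
      using S[OF orthonormal_frame_norm[OF frame]] pos[of i] by (simp add: divide_right_mono)
    then have "(\<Sum>i\<in>UNIV. s / d i) \<le> (\<Sum>i\<in>UNIV. (v i \<bullet> (S *v v i)) / d i)"
      by (rule sum_mono)
    also have "\<dots> = (\<Sum>i\<in>UNIV. v i \<bullet> ((S ** matrix_inv \<Sigma>) *v v i))"
      by (simp add: matrix_vector_mul_assoc[symmetric] inverse_eigen matrix_vector_mult_scaleR
          divide_inverse mult.commute)
    also have "\<dots> = trace (S ** matrix_inv \<Sigma>)"
      by (rule trace_eq_sum_orthonormal_frame[OF frame, symmetric])
    also have "\<dots> = trace (matrix_inv \<Sigma> ** S)"
      by (rule trace_mul_sym)
    finally show ?thesis .
  qed
  moreover have "0 \<le> \<rho> / 2 * (infdist \<Sigma> (sparse_sym_set k))\<^sup>2"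
    using \<open>0 \<le> \<rho>\<close> by simp
  ultimately show ?thesis
    unfolding h_rho_def sum.distrib by linarith
qed

theorem lemma1:
  fixes S :: "real^'n^'n" and \<rho> :: real and k :: nat
  assumes "psd_mat S" and "invertible S" and "\<rho> > 0"
    and "k \<le> CARD('n) choose 2"
  shows "\<forall>M. \<exists>R. \<forall>\<Sigma>::real^'n^'n. pd_mat \<Sigma> \<and> (norm \<Sigma> > R \<or> norm (matrix_inv \<Sigma>) > R)
             \<longrightarrow> h_rho S k \<rho> \<Sigma> > M"
proof (intro allI)
  fix M :: real
  obtain s where s: "0 < s" "\<And>x. norm x = 1 \<Longrightarrow> s \<le> x \<bullet> (S *v x)"
    using psd_invertible_quadratic_form_lower_bound[OF assms(1,2)] by blast
  define c where "c = min 0 (2 + 2 * ln (s / 2))"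
  define L where "L = M - CARD('n) * c"
  show "\<exists>R. \<forall>\<Sigma>::real^'n^'n. pd_mat \<Sigma> \<and> (norm \<Sigma> > R \<or> norm (matrix_inv \<Sigma>) > R)
             \<longrightarrow> h_rho S k \<rho> \<Sigma> > M"
  proof (intro exI[of _ "CARD('n) * exp L"] allI impI)
    fix \<Sigma> :: "real^'n^'n"
    assume \<Sigma>: "pd_mat \<Sigma> \<and> (norm \<Sigma> > CARD('n) * exp L \<or> norm (matrix_inv \<Sigma>) > CARD('n) * exp L)"
    then obtain v :: "'n \<Rightarrow> real^'n" and d where frame: "orthonormal_frame v"
      and eigen: "\<And>i. \<Sigma> *v v i = d i *\<^sub>R v i" and pos: "\<And>i. 0 < d i"
      using pd_mat_orthonormal_eigenframe by blast
    obtain j where j: "L < \<bar>ln (d j)\<bar>"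
      using norms_le_if_abs_ln_eigenvalues_le[OF frame eigen pos] \<Sigma> by (meson not_le)
    have "M < \<bar>ln (d j)\<bar> + CARD('n) * c"
      using j by (simp add: L_def)
    also have "\<dots> \<le> (\<Sum>i\<in>UNIV. \<bar>ln (d i)\<bar> + c)"
      using member_le_sum[of j UNIV "\<lambda>i. \<bar>ln (d i)\<bar>"] by (auto simp: sum.distrib)
    also have "\<dots> \<le> (\<Sum>i\<in>UNIV. ln (d i) + s / d i)"
      unfolding c_def by (intro sum_mono abs_ln_le_ln_add_divide[OF s(1) pos])
    also have "\<dots> \<le> h_rho S k \<rho> \<Sigma>"
      by (rule sum_ln_add_divide_le_h_rho[OF s(2) less_imp_le[OF assms(3)] frame eigen pos])
    finally show "M < h_rho S k \<rho> \<Sigma>" .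
  qed
qed

end
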